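(* Let $\beta>0$ and $\kappa=\frac{1}{\pi\beta}$, so that $\tilde\kappa=\kappa\beta=\frac1\pi$. Then, as $\beta\to0$, $$\min_{\mathcal J}F_{\beta,\kappa}=\frac{1-\sqrt{1-4\tilde\kappa^2}}{4\beta}-\frac{\tilde\kappa}{2\beta}\arcsin(2\tilde\kappa)+o_\beta(\beta^n)\quad\text{for all }n\in\mathbb N^*.$$
   Context: For parameters $\beta>0$ and $\kappa>0$ define, for $\varphi\in H^1((0,1))$, $$F_{\beta,\kappa}(\varphi)=\frac18\int_0^1\left(\varphi'(x)^2+\frac{1}{\beta^2}\sin^2\varphi(x)\right)dx-\frac{\kappa}{2}\int_0^1\varphi'(x)\,dx,$$ and $\mathcal J=\{\varphi\in H^1((0,1)):\varphi(0)=0\}$. The notation $o_\beta$ refers to the limit $\beta\to0$. *)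

theory Defs
  imports "HOL-Analysis.Analysis" "HOL-Library.Landau_Symbols"
begin

text \<open>phi is in H^1((0,1)) with weak derivative g: g and g^2 are integrable on [0,1]
  and phi is (the continuous representative) phi(x) = phi(0) + integral of g over [0,x].\<close>
definition H1_with_deriv :: "(real \<Rightarrow> real) \<Rightarrow> (real \<Rightarrow> real) \<Rightarrow> bool" where
  "H1_with_deriv \<phi> g \<longleftrightarrow>
     set_integrable lborel {0..1} g \<and>
     set_integrable lborel {0..1} (\<lambda>x. (g x)^2) \<and>
     (\<forall>x\<in>{0..1}. \<phi> x = \<phi> 0 + (LBINT t=0..x. g t))"

definition F_energy :: "real \<Rightarrow> real \<Rightarrow> (real \<Rightarrow> real) \<Rightarrow> (real \<Rightarrow> real) \<Rightarrow> real" where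
  "F_energy \<beta> \<kappa> \<phi> g =
     1/8 * (LBINT x=0..1. (g x)^2 + (sin (\<phi> x))^2 / \<beta>^2) - \<kappa>/2 * (LBINT x=0..1. g x)"

definition min_F :: "real \<Rightarrow> real \<Rightarrow> real" where
  "min_F \<beta> \<kappa> = Inf {F_energy \<beta> \<kappa> \<phi> g | \<phi> g. H1_with_deriv \<phi> g \<and> \<phi> 0 = 0}"

end

theory Submission
  imports Defs
begin

(* For phi(0) = 0 the Modica-Mortola trick gives
     beta F >= 1/4 int |sin phi| |phi'| - phi(1) / (2 pi) >= G(phi(1)) / 4 - phi(1) / (2 pi),
   where G is the primitive of |sin| vanishing at 0; the second inequality is a chain rule for the
   absolutely continuous phi. For kappa beta = 1/pi the right-hand side is pi-periodic in phi(1)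
   (the mean of |sin| is 2/pi), so its minimum is attained on [0, pi], at a = arcsin (2/pi).
   Conversely the kink psi(x) = 2 arctan (c e^(x/beta)) solves psi' = sin psi / beta, which turns
   the Modica-Mortola inequality into an equality. Choosing psi(1) = a and subtracting
   psi(0) = O(e^(-1/beta)) to meet the boundary condition gives an energy within
   O(e^(-1/beta) / beta^2) of the lower bound, and such errors are o(beta^n) for every n. *)

lemma real_mvt_closed_segment:
  fixes F f :: "real \<Rightarrow> real"
  assumes F: "\<And>p. (F has_real_derivative f p) (at p)"
  obtains \<xi> where "\<xi> \<in> closed_segment u v" "F v - F u = (v - u) * f \<xi>"
proof (cases u v rule: linorder_cases)
  case less
  then obtain z where "u < z" "z < v" "F v - F u = (v - u) * f z"
    using MVT2[OF less, of F f] F by blast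
  then show ?thesis using that[of z] by (simp add: closed_segment_eq_real_ivl)
next
  case equal
  then show ?thesis using that[of u] by simp
next
  case greater
  then obtain z where "v < z" "z < u" "F u - F v = (u - v) * f z"
    using MVT2[OF greater, of F f] F by blast
  then show ?thesis using that[of z] by (simp add: closed_segment_eq_real_ivl algebra_simps)
qed

lemma le_by_short_steps:
  fixes D :: "real \<Rightarrow> real"
  assumes "\<delta> > 0" "a \<le> b"
    and step: "\<And>x y. a \<le> x \<Longrightarrow> x \<le> y \<Longrightarrow> y \<le> b \<Longrightarrow> y - x < \<delta> \<Longrightarrow> D y \<le> D x"
  shows "D b \<le> D a"
proof -
  have "D y \<le> D a" if "a \<le> y" "y \<le> b" "y - a \<le> real n * (\<delta> / 2)" for n y
    using that
  proof (induction n arbitrary: y)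
    case 0
    then show ?case by simp
  next
    case (Suc n)
    show ?case
    proof (cases "y - a < \<delta>")
      case True
      then show ?thesis using step[of a y] Suc.prems by simp
    next
      case False
      then have "D (y - \<delta> / 2) \<le> D a"
        using Suc.IH[of "y - \<delta> / 2"] Suc.prems \<open>\<delta> > 0\<close> by (simp add: algebra_simps)
      moreover have "D y \<le> D (y - \<delta> / 2)"
        using step[of "y - \<delta> / 2" y] Suc.prems False \<open>\<delta> > 0\<close> by simp
      ultimately show ?thesis by simp
    qed
  qed
  moreover obtain n :: nat where "2 * (b - a) / \<delta> \<le> real n"
    using real_arch_simple by blast
  then have "b - a \<le> real n * (\<delta> / 2)"
    using \<open>\<delta> > 0\<close> by (simp add: field_simps)
  ultimately show ?thesis using \<open>a \<le> b\<close> by simp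
qed

lemma comp_diff_le_integral_local:
  fixes F f \<phi> g :: "real \<Rightarrow> real"
  assumes F: "\<And>p. (F has_real_derivative f p) (at p)"
    and "x \<le> y" and cont_\<phi>: "continuous_on {x..y} \<phi>"
    and \<phi>: "\<phi> y - \<phi> x = integral {x..y} g"
    and g: "g absolutely_integrable_on {x..y}"
    and w: "(\<lambda>t. \<bar>f (\<phi> t)\<bar> * \<bar>g t\<bar>) integrable_on {x..y}"
    and osc: "\<And>s t. s \<in> {x..y} \<Longrightarrow> t \<in> {x..y} \<Longrightarrow> \<bar>f (\<phi> s)\<bar> \<le> \<bar>f (\<phi> t)\<bar> + \<epsilon>"
  shows "F (\<phi> y) - F (\<phi> x)
    \<le> integral {x..y} (\<lambda>t. \<bar>f (\<phi> t)\<bar> * \<bar>g t\<bar>) + \<epsilon> * integral {x..y} (\<lambda>t. \<bar>g t\<bar>)"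
proof -
  obtain \<xi> where \<xi>: "\<xi> \<in> closed_segment (\<phi> x) (\<phi> y)"
    and mvt: "F (\<phi> y) - F (\<phi> x) = (\<phi> y - \<phi> x) * f \<xi>"
    using real_mvt_closed_segment[OF F] .
  obtain z where z: "z \<in> {x..y}" "\<phi> z = \<xi>"
    using IVT'_closed_segment_real[of \<xi> \<phi> x y] \<xi> cont_\<phi> \<open>x \<le> y\<close> by (auto simp: closed_segment_eq_real_ivl)
  define A where "A = integral {x..y} (\<lambda>t. \<bar>g t\<bar>)"
  have g_int: "g integrable_on {x..y}" and abs_g_int: "(\<lambda>t. \<bar>g t\<bar>) integrable_on {x..y}"
    using g by (auto simp: absolutely_integrable_on_def)
  have "\<bar>\<phi> y - \<phi> x\<bar> \<le> A"
    unfolding \<phi> A_def using integral_norm_bound_integral[OF g_int abs_g_int] by simp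
  then have "F (\<phi> y) - F (\<phi> x) \<le> A * \<bar>f \<xi>\<bar>"
    unfolding mvt by (metis abs_ge_self abs_ge_zero abs_mult mult_right_mono order_trans)
  also have "\<dots> = integral {x..y} (\<lambda>t. (\<bar>f \<xi>\<bar> - \<epsilon>) * \<bar>g t\<bar>) + \<epsilon> * A"
    unfolding A_def Henstock_Kurzweil_Integration.integral_mult_right by (simp add: algebra_simps)
  also have "integral {x..y} (\<lambda>t. (\<bar>f \<xi>\<bar> - \<epsilon>) * \<bar>g t\<bar>) \<le> integral {x..y} (\<lambda>t. \<bar>f (\<phi> t)\<bar> * \<bar>g t\<bar>)"
  proof (rule integral_le)
    fix t assume "t \<in> {x..y}"
    then have "\<bar>f \<xi>\<bar> - \<epsilon> \<le> \<bar>f (\<phi> t)\<bar>" using osc[OF z(1), of t] z(2) by simp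
    then show "(\<bar>f \<xi>\<bar> - \<epsilon>) * \<bar>g t\<bar> \<le> \<bar>f (\<phi> t)\<bar> * \<bar>g t\<bar>" by (simp add: mult_right_mono)
  qed (use integrable_on_cmult_left[OF abs_g_int] w in auto)
  finally show ?thesis unfolding A_def by simp
qed

lemma integral_Icc_diff:
  fixes f :: "real \<Rightarrow> real"
  assumes "f integrable_on {a..b}" "a \<le> x" "x \<le> y" "y \<le> b"
  shows "integral {a..y} f - integral {a..x} f = integral {x..y} f"
proof -
  have "f integrable_on {a..y}"
    by (rule integrable_on_subinterval[OF assms(1)]) (use assms in auto)
  then have "integral {a..x} f + integral {x..y} f = integral {a..y} f"
    by (rule Henstock_Kurzweil_Integration.integral_combine[OF assms(2,3)])
  then show ?thesis by simp
qed

lemma continuous_on_if_indefinite_integral: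
  fixes \<phi> g :: "real \<Rightarrow> real"
  assumes "g integrable_on {a..b}" and \<phi>: "\<And>x. x \<in> {a..b} \<Longrightarrow> \<phi> x = \<phi> a + integral {a..x} g"
  shows "continuous_on {a..b} \<phi>"
  using continuous_on_add[OF continuous_on_const indefinite_integral_continuous_1[OF assms(1)]]
  by (rule continuous_on_eq) (rule \<phi>[symmetric])

lemma abs_mult_absolutely_integrable_on:
  fixes h g :: "real \<Rightarrow> real"
  assumes h: "continuous_on {a..b} h" and g: "g absolutely_integrable_on {a..b}"
  shows "(\<lambda>t. \<bar>h t\<bar> * \<bar>g t\<bar>) absolutely_integrable_on {a..b}"
proof (rule absolutely_integrable_bounded_measurable_product_real)
  have abs_h: "continuous_on {a..b} (\<lambda>t. \<bar>h t\<bar>)" using h by (rule continuous_on_rabs)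
  show "(\<lambda>t. \<bar>h t\<bar>) \<in> borel_measurable (lebesgue_on {a..b})"
    by (rule continuous_imp_measurable_on_sets_lebesgue[OF abs_h]) simp
  show "bounded ((\<lambda>t. \<bar>h t\<bar>) ` {a..b})"
    by (rule compact_imp_bounded[OF compact_continuous_image[OF abs_h]]) simp
  show "(\<lambda>t. \<bar>g t\<bar>) absolutely_integrable_on {a..b}"
    using g by (auto simp: absolutely_integrable_on_def)
qed simp

lemma comp_diff_le_integral_plus_epsilon:
  fixes F f \<phi> g :: "real \<Rightarrow> real"
  assumes F: "\<And>p. (F has_real_derivative f p) (at p)" and cont_f: "continuous_on UNIV f"
    and "a \<le> b" and g: "g absolutely_integrable_on {a..b}"
    and \<phi>: "\<And>x. x \<in> {a..b} \<Longrightarrow> \<phi> x = \<phi> a + integral {a..x} g"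
    and "\<epsilon> > 0"
  shows "F (\<phi> b) - F (\<phi> a)
    \<le> integral {a..b} (\<lambda>t. \<bar>f (\<phi> t)\<bar> * \<bar>g t\<bar>) + \<epsilon> * integral {a..b} (\<lambda>t. \<bar>g t\<bar>)"
proof -
  have g_int: "g integrable_on {a..b}" and abs_g_int: "(\<lambda>t. \<bar>g t\<bar>) integrable_on {a..b}"
    using g by (auto simp: absolutely_integrable_on_def)
  have cont_\<phi>: "continuous_on {a..b} \<phi>"
    by (rule continuous_on_if_indefinite_integral[OF g_int \<phi>])
  have cont_f\<phi>: "continuous_on {a..b} (\<lambda>t. f (\<phi> t))"
    using continuous_on_compose2[OF cont_f cont_\<phi> subset_UNIV] .
  from abs_mult_absolutely_integrable_on[OF this g]
  have w: "(\<lambda>t. \<bar>f (\<phi> t)\<bar> * \<bar>g t\<bar>) integrable_on {a..b}"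
    by (simp add: absolutely_integrable_on_def)
  have "uniformly_continuous_on {a..b} (\<lambda>t. \<bar>f (\<phi> t)\<bar>)"
    by (rule compact_uniformly_continuous[OF continuous_on_rabs[OF cont_f\<phi>]]) simp
  then obtain \<delta> where "\<delta> > 0" and \<delta>: "\<And>s t. s \<in> {a..b} \<Longrightarrow> t \<in> {a..b} \<Longrightarrow> dist s t < \<delta>
      \<Longrightarrow> dist \<bar>f (\<phi> s)\<bar> \<bar>f (\<phi> t)\<bar> < \<epsilon>"
    unfolding uniformly_continuous_on_def using \<open>\<epsilon> > 0\<close> by metis
  define D where "D z = F (\<phi> z) - integral {a..z} (\<lambda>t. \<bar>f (\<phi> t)\<bar> * \<bar>g t\<bar>)
    - \<epsilon> * integral {a..z} (\<lambda>t. \<bar>g t\<bar>)" for z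
  have "D b \<le> D a"
  proof (rule le_by_short_steps[OF \<open>\<delta> > 0\<close> \<open>a \<le> b\<close>])
    fix x y assume xy: "a \<le> x" "x \<le> y" "y \<le> b" "y - x < \<delta>"
    have sub: "{x..y} \<subseteq> {a..b}" using xy by auto
    have "F (\<phi> y) - F (\<phi> x)
      \<le> integral {x..y} (\<lambda>t. \<bar>f (\<phi> t)\<bar> * \<bar>g t\<bar>) + \<epsilon> * integral {x..y} (\<lambda>t. \<bar>g t\<bar>)"
    proof (rule comp_diff_le_integral_local[OF F \<open>x \<le> y\<close>])
      show "continuous_on {x..y} \<phi>" using continuous_on_subset[OF cont_\<phi> sub] .
      show "\<phi> y - \<phi> x = integral {x..y} g"
        using \<phi>[of x] \<phi>[of y] integral_Icc_diff[OF g_int xy(1-3)] xy by simp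
      show "g absolutely_integrable_on {x..y}" using absolutely_integrable_on_subinterval[OF g sub] .
      show "(\<lambda>t. \<bar>f (\<phi> t)\<bar> * \<bar>g t\<bar>) integrable_on {x..y}" using integrable_on_subinterval[OF w sub] .
      fix s t assume "s \<in> {x..y}" "t \<in> {x..y}"
      then have "dist \<bar>f (\<phi> s)\<bar> \<bar>f (\<phi> t)\<bar> < \<epsilon>"
        using \<delta>[of s t] sub xy by (auto simp: dist_real_def)
      then show "\<bar>f (\<phi> s)\<bar> \<le> \<bar>f (\<phi> t)\<bar> + \<epsilon>" by (simp add: dist_real_def)
    qed
    then show "D y \<le> D x"
      unfolding D_def using integral_Icc_diff[OF w xy(1-3)] integral_Icc_diff[OF abs_g_int xy(1-3)]
      by (simp add: algebra_simps)
  qed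
  then show ?thesis by (simp add: D_def)
qed

lemma comp_diff_le_integral:
  fixes F f \<phi> g :: "real \<Rightarrow> real"
  assumes F: "\<And>p. (F has_real_derivative f p) (at p)" and cont_f: "continuous_on UNIV f"
    and "a \<le> b" and g: "g absolutely_integrable_on {a..b}"
    and \<phi>: "\<And>x. x \<in> {a..b} \<Longrightarrow> \<phi> x = \<phi> a + integral {a..x} g"
  shows "F (\<phi> b) - F (\<phi> a) \<le> integral {a..b} (\<lambda>t. \<bar>f (\<phi> t)\<bar> * \<bar>g t\<bar>)"
proof -
  have abs_g_int: "(\<lambda>t. \<bar>g t\<bar>) integrable_on {a..b}"
    using g by (auto simp: absolutely_integrable_on_def)
  define A where "A = integral {a..b} (\<lambda>t. \<bar>g t\<bar>)"
  have "A \<ge> 0" unfolding A_def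
    by (rule integral_nonneg[OF abs_g_int]) simp
  show ?thesis
  proof (rule field_le_epsilon)
    fix e :: real assume "e > 0"
    then have "e / (A + 1) > 0" using \<open>A \<ge> 0\<close> by simp
    from comp_diff_le_integral_plus_epsilon[OF F cont_f \<open>a \<le> b\<close> g \<phi> this]
    have "F (\<phi> b) - F (\<phi> a) \<le> integral {a..b} (\<lambda>t. \<bar>f (\<phi> t)\<bar> * \<bar>g t\<bar>) + e / (A + 1) * A"
      by (simp add: A_def)
    also have "e / (A + 1) * A \<le> e"
      using \<open>e > 0\<close> \<open>A \<ge> 0\<close> by (simp add: field_simps)
    finally show "F (\<phi> b) - F (\<phi> a) \<le> integral {a..b} (\<lambda>t. \<bar>f (\<phi> t)\<bar> * \<bar>g t\<bar>) + e"
      by simp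
  qed
qed

definition abs_sin_primitive :: "real \<Rightarrow> real" where
  "abs_sin_primitive p = (LBINT s=ereal 0..ereal p. \<bar>sin s\<bar>)"

lemma abs_sin_primitive_has_real_derivative:
  "(abs_sin_primitive has_real_derivative \<bar>sin p\<bar>) (at p)"
proof -
  define b where "b = \<bar>p\<bar> + 1"
  have "((\<lambda>u. LBINT s=ereal 0..ereal u. \<bar>sin s\<bar>) has_vector_derivative \<bar>sin p\<bar>) (at p within {-b..b})"
    by (rule interval_integral_FTC2) (auto simp: b_def intro!: continuous_intros)
  moreover have "p \<in> interior {-b..b}"
    unfolding b_def interior_atLeastAtMost_real by (cases "p \<ge> 0") auto
  ultimately show ?thesis
    unfolding abs_sin_primitive_def has_real_derivative_iff_has_vector_derivative
    using at_within_interior by metis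
qed

lemma abs_sin_primitive_eq:
  assumes "0 \<le> q" "q \<le> pi"
  shows "abs_sin_primitive q = 1 - cos q"
proof -
  have "(LBINT s=ereal 0..ereal q. \<bar>sin s\<bar>) = - cos q - - cos 0"
  proof (rule interval_integral_FTC_finite)
    show "continuous_on {min 0 q..max 0 q} (\<lambda>s. \<bar>sin s\<bar>)" by (intro continuous_intros)
    fix x assume "min 0 q \<le> x" "x \<le> max 0 q"
    then have "sin x \<ge> 0" using assms by (intro sin_ge_zero) auto
    then have "((\<lambda>x. - cos x) has_real_derivative \<bar>sin x\<bar>) (at x)"
      by (auto intro!: derivative_eq_intros)
    then show "((\<lambda>x. - cos x) has_vector_derivative \<bar>sin x\<bar>) (at x within {min 0 q..max 0 q})"
      by (simp add: has_real_derivative_iff_has_vector_derivative has_vector_derivative_at_within)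
  qed
  then show ?thesis by (simp add: abs_sin_primitive_def)
qed

lemma abs_sin_primitive_add_pi: "abs_sin_primitive (p + pi) = abs_sin_primitive p + 2"
proof -
  have "((\<lambda>p. abs_sin_primitive (p + pi)) has_real_derivative \<bar>sin (x + pi)\<bar> * 1) (at x)" for x
    by (rule DERIV_chain2[OF abs_sin_primitive_has_real_derivative]) (auto intro!: derivative_eq_intros)
  from DERIV_diff[OF this abs_sin_primitive_has_real_derivative]
  have "((\<lambda>p. abs_sin_primitive (p + pi) - abs_sin_primitive p) has_real_derivative 0) (at x)" for x
    by simp
  then have "abs_sin_primitive (p + pi) - abs_sin_primitive p
      = abs_sin_primitive (0 + pi) - abs_sin_primitive 0"
    by (rule DERIV_isconst_all[OF allI])
  then show ?thesis by (simp add: abs_sin_primitive_eq)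
qed

definition endpoint_energy :: "real \<Rightarrow> real" where
  "endpoint_energy p = abs_sin_primitive p / 4 - p / (2 * pi)"

lemma endpoint_energy_add_pi: "endpoint_energy (p + pi) = endpoint_energy p"
  by (simp only: endpoint_energy_def abs_sin_primitive_add_pi) (simp add: field_simps)

lemma periodic_ge:
  fixes h :: "real \<Rightarrow> real"
  assumes "T > 0" and periodic: "\<And>x. h (x + T) = h x"
    and ge: "\<And>x. 0 \<le> x \<Longrightarrow> x \<le> T \<Longrightarrow> m \<le> h x"
  shows "m \<le> h x"
proof -
  have shift: "h (y + real n * T) = h y" for y n
  proof (induction n)
    case (Suc n)
    then show ?case using periodic[of "y + real n * T"] by (simp add: algebra_simps)
  qed simp
  define k where "k = \<lfloor>x / T\<rfloor>"
  define q where "q = x - of_int k * T"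
  have "of_int k \<le> x / T" "x / T < of_int k + 1"
    unfolding k_def by linarith+
  then have q: "0 \<le> q" "q \<le> T"
    using \<open>T > 0\<close> by (simp_all add: q_def field_simps)
  have "h x = h q"
  proof (cases "k \<ge> 0")
    case True
    then show ?thesis using shift[of q "nat k"] by (simp add: q_def)
  next
    case False
    then show ?thesis using shift[of x "nat (- k)"] by (simp add: q_def)
  qed
  then show ?thesis using ge[OF q] by simp
qed

definition optimal_angle :: real where
  "optimal_angle = arcsin (2 / pi)"

lemma optimal_angle:
  "sin optimal_angle = 2 / pi" "0 \<le> optimal_angle" "optimal_angle \<le> pi / 2"
  "cos optimal_angle = sqrt (1 - (2 / pi)^2)"
proof -
  have bounds: "-1 \<le> 2 / pi" "2 / pi \<le> 1"
    using pi_gt3 by (simp_all add: field_simps)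
  show "sin optimal_angle = 2 / pi" "cos optimal_angle = sqrt (1 - (2 / pi)^2)"
    unfolding optimal_angle_def using sin_arcsin[OF bounds] cos_arcsin[OF bounds] by auto
  show "0 \<le> optimal_angle" "optimal_angle \<le> pi / 2"
    unfolding optimal_angle_def using arcsin_bounded[OF bounds] arcsin_le_arcsin[of 0 "2 / pi"] bounds
    by auto
qed

lemma sin_ge_sin_iff:
  assumes "0 \<le> a" "a \<le> pi / 2" "0 \<le> x" "x \<le> pi"
  shows "sin a \<le> sin x \<longleftrightarrow> a \<le> x \<and> x \<le> pi - a"
proof (cases "x \<le> pi / 2")
  case True
  then show ?thesis using assms sin_mono_le_eq[of a x] by auto
next
  case False
  then have "sin a \<le> sin (pi - x) \<longleftrightarrow> a \<le> pi - x"
    using assms by (intro sin_mono_le_eq) auto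
  then show ?thesis using False assms by auto
qed

lemma endpoint_energy_ge_on_period:
  assumes "0 \<le> q" "q \<le> pi"
  shows "endpoint_energy optimal_angle \<le> endpoint_energy q"
proof -
  define a where "a = optimal_angle"
  define u where "u x = (1 - cos x) / 4 - x / (2 * pi)" for x
  have u_eq: "endpoint_energy x = u x" if "0 \<le> x" "x \<le> pi" for x
    using that by (simp add: endpoint_energy_def u_def abs_sin_primitive_eq)
  have u': "(u has_real_derivative (sin x - sin a) / 4) (at x)" for x
    unfolding u_def[abs_def] a_def optimal_angle(1) by (auto intro!: derivative_eq_intros)
  have a: "0 \<le> a" "a \<le> pi / 2" using optimal_angle by (auto simp: a_def)
  have sin_a: "sin a \<le> sin x \<longleftrightarrow> a \<le> x \<and> x \<le> pi - a" if "0 \<le> x" "x \<le> pi" for x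
    using sin_ge_sin_iff[OF a that] .
  have sin_le_a: "sin x \<le> sin a" if "0 \<le> x" "x \<le> pi" "x \<le> a \<or> pi - a \<le> x" for x
  proof (cases "x = a \<or> x = pi - a")
    case False
    then show ?thesis using sin_a[OF that(1,2)] that(3) by auto
  qed auto
  have decreasing: "u y \<le> u x" if "x \<le> y" "\<And>t. x \<le> t \<Longrightarrow> t \<le> y \<Longrightarrow> sin t \<le> sin a" for x y
    using DERIV_nonpos_imp_nonincreasing[OF \<open>x \<le> y\<close>, of u] u' that(2) by force
  have increasing: "u x \<le> u y" if "x \<le> y" "\<And>t. x \<le> t \<Longrightarrow> t \<le> y \<Longrightarrow> sin a \<le> sin t" for x y
    using DERIV_nonneg_imp_nondecreasing[OF \<open>x \<le> y\<close>, of u] u' that(2) by force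
  have "u a \<le> u q"
  proof -
    consider "q \<le> a" | "a \<le> q" "q \<le> pi - a" | "pi - a \<le> q" by linarith
    then show ?thesis
    proof cases
      case 1
      then show ?thesis using assms a by (intro decreasing sin_le_a) auto
    next
      case 2
      then show ?thesis using a sin_a by (intro increasing) auto
    next
      case 3
      have "u pi \<le> u q" using 3 assms a by (intro decreasing sin_le_a) auto
      moreover have "u a \<le> u 0" using a by (intro decreasing sin_le_a) auto
      moreover have "u pi = u 0" by (simp add: u_def)
      ultimately show ?thesis by linarith
    qed
  qed
  then show ?thesis using u_eq[OF assms] u_eq[of a] a pi_gt_zero by (simp add: a_def)
qed

lemma endpoint_energy_ge: "endpoint_energy optimal_angle \<le> endpoint_energy p"
  by (rule periodic_ge[where h = endpoint_energy,
        OF pi_gt_zero endpoint_energy_add_pi endpoint_energy_ge_on_period])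

lemma endpoint_energy_optimal_angle:
  "endpoint_energy optimal_angle
    = (1 - sqrt (1 - 4 * (1 / pi)^2)) / 4 - (1 / pi) / 2 * arcsin (2 * (1 / pi))"
  using optimal_angle pi_gt_zero
  by (simp add: endpoint_energy_def abs_sin_primitive_eq power_divide optimal_angle_def)

lemma lbint_eq_integral:
  fixes f :: "real \<Rightarrow> real"
  assumes "set_integrable lborel {a..b} f" "a \<le> b"
  shows "(LBINT x=ereal a..ereal b. f x) = integral {a..b} f"
proof -
  have "(LBINT x=ereal a..ereal b. f x) = (LBINT x:{a..b}. f x)"
    by (rule interval_integral_Icc[OF assms(2)])
  also have "\<dots> = integral {a..b} f"
    by (rule set_borel_integral_eq_integral(2)[OF assms(1)])
  finally show ?thesis .
qed

lemma H1_with_deriv_integral: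
  assumes "H1_with_deriv \<phi> g"
  shows "g absolutely_integrable_on {0..1}"
    and "\<And>x. x \<in> {0..1} \<Longrightarrow> \<phi> x = \<phi> 0 + integral {0..x} g"
    and "(LBINT t=0..1. g t) = \<phi> 1 - \<phi> 0"
proof -
  have g: "set_integrable lborel {0..1} g"
    and \<phi>: "\<forall>x\<in>{0..1}. \<phi> x = \<phi> 0 + (LBINT t=0..x. g t)"
    using assms unfolding H1_with_deriv_def by blast+
  have "g integrable_on {0..1}" "(\<lambda>x. \<bar>g x\<bar>) integrable_on {0..1}"
    using set_borel_integral_eq_integral(1)[OF g] set_borel_integral_eq_integral(1)[OF set_integrable_abs[OF g]]
    by auto
  then show "g absolutely_integrable_on {0..1}"
    by (simp add: absolutely_integrable_on_def)
  have "\<phi> 1 = \<phi> 0 + (LBINT t=0..ereal 1. g t)"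
    by (rule bspec[OF \<phi>]) simp
  then show "(LBINT t=0..1. g t) = \<phi> 1 - \<phi> 0"
    unfolding one_ereal_def by linarith
  fix x :: real assume x: "x \<in> {0..1}"
  have "set_integrable lborel {0..x} g"
    by (rule set_integrable_subset[OF g]) (use x in auto)
  then have "(LBINT t=0..x. g t) = integral {0..x} g"
    unfolding zero_ereal_def by (rule lbint_eq_integral) (use x in auto)
  moreover have "\<phi> x = \<phi> 0 + (LBINT t=0..x. g t)"
    using \<phi> x by blast
  ultimately show "\<phi> x = \<phi> 0 + integral {0..x} g"
    by linarith
qed

lemma two_abs_sin_mult_le:
  fixes \<beta> p v :: real
  assumes "\<beta> > 0"
  shows "2 / \<beta> * (\<bar>sin p\<bar> * \<bar>v\<bar>) \<le> v^2 + (sin p)^2 / \<beta>^2"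
proof -
  have "0 \<le> (\<bar>v\<bar> - \<bar>sin p\<bar> / \<beta>)^2" by (rule zero_le_power2)
  also have "\<dots> = v^2 + (sin p)^2 / \<beta>^2 - 2 / \<beta> * (\<bar>sin p\<bar> * \<bar>v\<bar>)"
    using assms by (simp add: power2_diff power_divide)
  finally show ?thesis by simp
qed

lemma F_energy_ge_endpoint_energy:
  fixes \<phi> g :: "real \<Rightarrow> real"
  assumes "\<beta> > 0" and H: "H1_with_deriv \<phi> g" and "\<phi> 0 = 0"
  shows "endpoint_energy (\<phi> 1) / \<beta> \<le> F_energy \<beta> (1 / (pi * \<beta>)) \<phi> g"
proof -
  note g = H1_with_deriv_integral(1)[OF H] and \<phi> = H1_with_deriv_integral(2)[OF H]
  have g2: "set_integrable lborel {0..1} (\<lambda>x. (g x)^2)"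
    using H unfolding H1_with_deriv_def by blast
  have cont_\<phi>: "continuous_on {0..1} \<phi>"
    by (rule continuous_on_if_indefinite_integral[OF _ \<phi>]) (use g in \<open>simp add: absolutely_integrable_on_def\<close>)
  define e where "e x = (g x)^2 + (sin (\<phi> x))^2 / \<beta>^2" for x
  have "set_integrable lborel {0..1} (\<lambda>x. (sin (\<phi> x))^2 / \<beta>^2)"
    by (rule borel_integrable_atLeastAtMost') (use \<open>\<beta> > 0\<close> in \<open>auto intro!: continuous_intros cont_\<phi>\<close>)
  then have e: "set_integrable lborel {0..1} e"
    unfolding e_def by (rule set_integral_add(1)[OF g2])
  have w: "(\<lambda>t. \<bar>sin (\<phi> t)\<bar> * \<bar>g t\<bar>) integrable_on {0..1}"
    using abs_mult_absolutely_integrable_on[OF continuous_on_sin[OF cont_\<phi>] g]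
    by (simp add: absolutely_integrable_on_def)
  have "abs_sin_primitive (\<phi> 1) \<le> integral {0..1} (\<lambda>t. \<bar>sin (\<phi> t)\<bar> * \<bar>g t\<bar>)"
    using comp_diff_le_integral[OF abs_sin_primitive_has_real_derivative _ _ g \<phi>]
      \<open>\<phi> 0 = 0\<close> abs_sin_primitive_eq[of 0] by (simp add: continuous_on_rabs continuous_on_sin)
  then have "2 / \<beta> * abs_sin_primitive (\<phi> 1) \<le> integral {0..1} (\<lambda>t. 2 / \<beta> * (\<bar>sin (\<phi> t)\<bar> * \<bar>g t\<bar>))"
    using \<open>\<beta> > 0\<close> by (simp add: divide_right_mono)
  also have "\<dots> \<le> integral {0..1} e"
  proof (rule integral_le)
    show "(\<lambda>t. 2 / \<beta> * (\<bar>sin (\<phi> t)\<bar> * \<bar>g t\<bar>)) integrable_on {0..1}"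
      using integrable_on_cmult_left[OF w, of "2 / \<beta>"] by simp
    show "e integrable_on {0..1}" by (rule set_borel_integral_eq_integral(1)[OF e])
    show "2 / \<beta> * (\<bar>sin (\<phi> t)\<bar> * \<bar>g t\<bar>) \<le> e t" for t
      unfolding e_def by (rule two_abs_sin_mult_le[OF \<open>\<beta> > 0\<close>])
  qed
  also have "\<dots> = (LBINT x=0..1. (g x)^2 + (sin (\<phi> x))^2 / \<beta>^2)"
    using lbint_eq_integral[OF e zero_le_one] unfolding zero_ereal_def one_ereal_def e_def by (rule sym)
  finally have energy: "2 / \<beta> * abs_sin_primitive (\<phi> 1) \<le> (LBINT x=0..1. (g x)^2 + (sin (\<phi> x))^2 / \<beta>^2)" .
  have "(LBINT x=0..1. g x) = \<phi> 1"
    using H1_with_deriv_integral(3)[OF H] \<open>\<phi> 0 = 0\<close> by simp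
  moreover have "endpoint_energy (\<phi> 1) / \<beta>
      = 1/8 * (2 / \<beta> * abs_sin_primitive (\<phi> 1)) - 1 / (pi * \<beta>) / 2 * \<phi> 1"
    using \<open>\<beta> > 0\<close> by (simp add: endpoint_energy_def field_simps)
  ultimately show ?thesis
    using energy unfolding F_energy_def by simp
qed

lemma abs_sin_diff_le:
  fixes u v :: real
  shows "\<bar>sin u - sin v\<bar> \<le> \<bar>u - v\<bar>"
proof -
  have "\<bar>sin u - sin v\<bar> = 2 * \<bar>sin ((u - v) / 2)\<bar> * \<bar>cos ((u + v) / 2)\<bar>"
    by (simp add: sin_diff_sin abs_mult)
  also have "\<dots> \<le> 2 * \<bar>(u - v) / 2\<bar> * 1"
    by (intro mult_mono abs_sin_x_le_abs_x) auto
  finally show ?thesis by simp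
qed

lemma abs_cos_diff_le:
  fixes u v :: real
  shows "\<bar>cos u - cos v\<bar> \<le> \<bar>u - v\<bar>"
proof -
  have "\<bar>cos u - cos v\<bar> = 2 * \<bar>sin ((u + v) / 2)\<bar> * \<bar>sin ((v - u) / 2)\<bar>"
    by (simp add: cos_diff_cos abs_mult)
  also have "\<dots> \<le> 2 * 1 * \<bar>(v - u) / 2\<bar>"
    by (intro mult_mono abs_sin_x_le_abs_x) auto
  finally show ?thesis by simp
qed

lemma sin_squares_le:
  fixes u v :: real
  shows "(sin u)^2 + (sin v)^2 \<le> (u - v)^2 + 2 * sin u * sin v"
proof -
  have "(sin u - sin v)^2 \<le> (u - v)^2"
    using abs_sin_diff_le[of u v] by (metis abs_ge_zero power2_abs power_mono)
  then show ?thesis by (simp add: power2_diff)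
qed

lemma F_energy_shifted_solution:
  fixes \<psi> :: "real \<Rightarrow> real"
  assumes "\<beta> > 0" and \<psi>: "\<And>x. (\<psi> has_real_derivative sin (\<psi> x) / \<beta>) (at x)"
  defines "\<phi> \<equiv> \<lambda>x. \<psi> x - \<psi> 0" and "g \<equiv> \<lambda>x. sin (\<psi> x) / \<beta>"
  shows "H1_with_deriv \<phi> g"
    and "F_energy \<beta> \<kappa> \<phi> g
      \<le> (\<psi> 0)^2 / (8 * \<beta>^2) + (1 - cos (\<phi> 1)) / (4 * \<beta>) - \<kappa> / 2 * \<phi> 1"
proof -
  have \<phi>': "(\<phi> has_real_derivative g x) (at x)" for x
    unfolding \<phi>_def g_def using \<psi>[of x] by (auto intro!: derivative_eq_intros)
  have cont_\<psi>: "continuous_on S \<psi>" for S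
    using \<psi> by (meson DERIV_isCont continuous_at_imp_continuous_on)
  have cont_\<phi>: "continuous_on S \<phi>" and cont_g: "continuous_on S g" for S
    unfolding \<phi>_def g_def using \<open>\<beta> > 0\<close> by (auto intro!: continuous_intros cont_\<psi>)
  have FTC: "(LBINT t=ereal a..ereal b. g t) = \<phi> b - \<phi> a" for a b
  proof (rule interval_integral_FTC_finite[OF cont_g])
    show "(\<phi> has_vector_derivative g x) (at x within {min a b..max a b})" for x
      using \<phi>'[of x] by (simp add: has_real_derivative_iff_has_vector_derivative has_vector_derivative_at_within)
  qed
  have g: "set_integrable lborel {0..1} g" and g2: "set_integrable lborel {0..1} (\<lambda>x. (g x)^2)"
    by (rule borel_integrable_atLeastAtMost', intro continuous_intros cont_g)+
  show "H1_with_deriv \<phi> g"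
    unfolding H1_with_deriv_def zero_ereal_def FTC using g g2 by (simp add: \<phi>_def)
  define c where "c = (\<psi> 0)^2 / \<beta>^2"
  define e where "e x = (g x)^2 + (sin (\<phi> x))^2 / \<beta>^2" for x
  define P where "P x = c * x - 2 * cos (\<phi> x) / \<beta>" for x
  have e: "set_integrable lborel {0..1} e"
    unfolding e_def using \<open>\<beta> > 0\<close>
    by (intro borel_integrable_atLeastAtMost') (auto intro!: continuous_intros cont_g cont_\<phi>)
  have P: "((\<lambda>x. c + 2 * g x * sin (\<phi> x) / \<beta>) has_integral P 1 - P 0) {0..1}"
  proof (rule fundamental_theorem_of_calculus)
    fix x :: real
    have "(P has_real_derivative c + 2 * g x * sin (\<phi> x) / \<beta>) (at x)"
      unfolding P_def[abs_def] using \<open>\<beta> > 0\<close> by (auto intro!: derivative_eq_intros \<phi>')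
    then show "(P has_vector_derivative c + 2 * g x * sin (\<phi> x) / \<beta>) (at x within {0..1})"
      by (simp add: has_real_derivative_iff_has_vector_derivative has_vector_derivative_at_within)
  qed simp
  have "integral {0..1} e \<le> integral {0..1} (\<lambda>x. c + 2 * g x * sin (\<phi> x) / \<beta>)"
  proof (rule integral_le)
    show "e integrable_on {0..1}" by (rule set_borel_integral_eq_integral(1)[OF e])
    show "(\<lambda>x. c + 2 * g x * sin (\<phi> x) / \<beta>) integrable_on {0..1}"
      using P by blast
    fix x
    have "(sin (\<psi> x))^2 + (sin (\<phi> x))^2 \<le> (\<psi> 0)^2 + 2 * sin (\<psi> x) * sin (\<phi> x)"
      using sin_squares_le[of "\<psi> x" "\<phi> x"] by (simp add: \<phi>_def)
    then have "((sin (\<psi> x))^2 + (sin (\<phi> x))^2) / \<beta>^2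
        \<le> ((\<psi> 0)^2 + 2 * sin (\<psi> x) * sin (\<phi> x)) / \<beta>^2"
      by (rule divide_right_mono) simp
    then show "e x \<le> c + 2 * g x * sin (\<phi> x) / \<beta>"
      using \<open>\<beta> > 0\<close> by (simp add: e_def c_def g_def power_divide add_divide_distrib power2_eq_square)
  qed
  also have "\<dots> = c + 2 * (1 - cos (\<phi> 1)) / \<beta>"
    using integral_unique[OF P] by (simp add: P_def \<phi>_def diff_divide_distrib)
  finally have "(LBINT x=0..1. (g x)^2 + (sin (\<phi> x))^2 / \<beta>^2) \<le> c + 2 * (1 - cos (\<phi> 1)) / \<beta>"
    using lbint_eq_integral[OF e zero_le_one] unfolding zero_ereal_def one_ereal_def e_def by simp
  moreover have "(LBINT x=0..1. g x) = \<phi> 1"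
    unfolding zero_ereal_def one_ereal_def FTC by (simp add: \<phi>_def)
  ultimately show "F_energy \<beta> \<kappa> \<phi> g
      \<le> (\<psi> 0)^2 / (8 * \<beta>^2) + (1 - cos (\<phi> 1)) / (4 * \<beta>) - \<kappa> / 2 * \<phi> 1"
    unfolding F_energy_def c_def using \<open>\<beta> > 0\<close> by (simp add: field_simps)
qed

lemma sin_double_arctan:
  fixes u :: real
  shows "sin (2 * arctan u) = 2 * u / (1 + u^2)"
proof -
  have "sin (2 * arctan u) = 2 * u / (sqrt (1 + u^2))^2"
    by (simp add: sin_double sin_arctan cos_arctan power2_eq_square)
  then show ?thesis by (simp add: add_pos_nonneg)
qed

lemma kink_has_real_derivative:
  fixes \<beta> c x :: real
  assumes "\<beta> \<noteq> 0"
  shows "((\<lambda>x. 2 * arctan (c * exp (x / \<beta>))) has_real_derivative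
    sin (2 * arctan (c * exp (x / \<beta>))) / \<beta>) (at x)"
proof -
  define u where "u = c * exp (x / \<beta>)"
  have "((\<lambda>x. 2 * arctan (c * exp (x / \<beta>))) has_real_derivative 2 * (inverse (1 + u^2) * (u / \<beta>))) (at x)"
    unfolding u_def using assms by (auto intro!: derivative_eq_intros simp: power2_eq_square)
  then show ?thesis
    unfolding sin_double_arctan u_def[symmetric] by (simp add: field_simps)
qed

lemma tan_half_optimal_angle:
  "0 \<le> tan (optimal_angle / 2)" "tan (optimal_angle / 2) \<le> 1"
  "2 * arctan (tan (optimal_angle / 2)) = optimal_angle"
proof -
  note a = optimal_angle(2,3)
  show "0 \<le> tan (optimal_angle / 2)" by (rule tan_pos_pi2_le) (use a pi_gt_zero in linarith)+
  have "tan (optimal_angle / 2) \<le> tan (pi / 4)" by (rule tan_mono_le) (use a pi_gt_zero in linarith)+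
  then show "tan (optimal_angle / 2) \<le> 1" by (simp add: tan_45)
  have "arctan (tan (optimal_angle / 2)) = optimal_angle / 2"
    by (rule arctan_tan) (use a pi_gt_zero in linarith)+
  then show "2 * arctan (tan (optimal_angle / 2)) = optimal_angle" by simp
qed

lemma kink_energy_le:
  fixes \<beta> :: real
  assumes "\<beta> > 0"
  obtains \<phi> g where "H1_with_deriv \<phi> g" "\<phi> 0 = 0"
    "F_energy \<beta> (1 / (pi * \<beta>)) \<phi> g
      \<le> endpoint_energy optimal_angle / \<beta> + exp (- 1 / \<beta>) / \<beta> + exp (- 1 / \<beta>) / \<beta>^2"
proof -
  define a where "a = optimal_angle"
  define e where "e = exp (- 1 / \<beta>)"
  define t where "t = tan (a / 2)"
  define \<psi> where "\<psi> x = 2 * arctan (t * e * exp (x / \<beta>))" for x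
  define \<epsilon> where "\<epsilon> = \<psi> 0"
  have t: "0 \<le> t" "t \<le> 1" using tan_half_optimal_angle by (auto simp: t_def a_def)
  have e: "0 < e" "e \<le> 1" using \<open>\<beta> > 0\<close> by (auto simp: e_def)
  have \<psi>': "(\<psi> has_real_derivative sin (\<psi> x) / \<beta>) (at x)" for x
    unfolding \<psi>_def[abs_def] using kink_has_real_derivative \<open>\<beta> > 0\<close> by simp
  have "e * exp (1 / \<beta>) = 1" by (simp add: e_def flip: exp_add)
  then have "\<psi> 1 = a"
    using tan_half_optimal_angle(3) by (simp add: \<psi>_def t_def a_def mult.assoc)
  have \<epsilon>: "0 \<le> \<epsilon>" "\<epsilon> \<le> 2 * e"
  proof -
    show "0 \<le> \<epsilon>" using t e by (simp add: \<epsilon>_def \<psi>_def)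
    have "\<epsilon> \<le> 2 * (t * e)" using arctan_le_self[of "t * e"] t e by (simp add: \<epsilon>_def \<psi>_def)
    also have "\<dots> \<le> 2 * e" using t e by (simp add: mult_left_le_one_le)
    finally show "\<epsilon> \<le> 2 * e" .
  qed
  have lipschitz: "1 - cos (a - \<epsilon>) \<le> 1 - cos a + \<epsilon>"
    using abs_cos_diff_le[of a "a - \<epsilon>"] \<epsilon> by simp
  have endpoint: "endpoint_energy a = (1 - cos a) / 4 - a / (2 * pi)"
    using optimal_angle(2,3) pi_gt_zero by (simp add: endpoint_energy_def abs_sin_primitive_eq a_def)
  have "\<epsilon> / (2 * pi) \<le> \<epsilon> / 6"
    using \<epsilon> pi_gt3 by (intro divide_left_mono) auto
  then have "(1 - cos (a - \<epsilon>)) / 4 - (a - \<epsilon>) / (2 * pi) \<le> endpoint_energy a + e"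
    using lipschitz \<epsilon> unfolding endpoint diff_divide_distrib by linarith
  then have "((1 - cos (a - \<epsilon>)) / 4 - (a - \<epsilon>) / (2 * pi)) / \<beta> \<le> (endpoint_energy a + e) / \<beta>"
    using \<open>\<beta> > 0\<close> by (simp add: divide_right_mono)
  moreover have "((1 - cos (a - \<epsilon>)) / 4 - (a - \<epsilon>) / (2 * pi)) / \<beta>
      = (1 - cos (a - \<epsilon>)) / (4 * \<beta>) - 1 / (pi * \<beta>) / 2 * (a - \<epsilon>)"
    using \<open>\<beta> > 0\<close> by (simp add: field_simps)
  ultimately have main: "(1 - cos (a - \<epsilon>)) / (4 * \<beta>) - 1 / (pi * \<beta>) / 2 * (a - \<epsilon>)
      \<le> endpoint_energy a / \<beta> + e / \<beta>"
    by (simp add: add_divide_distrib)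
  have "\<epsilon>^2 \<le> (2 * e)^2" using \<epsilon> by (intro power_mono) auto
  also have "\<dots> \<le> 8 * e" using e by (simp add: power2_eq_square)
  finally have "\<epsilon>^2 / (8 * \<beta>^2) \<le> e / \<beta>^2"
    using \<open>\<beta> > 0\<close> by (simp add: field_simps)
  then have "F_energy \<beta> (1 / (pi * \<beta>)) (\<lambda>x. \<psi> x - \<psi> 0) (\<lambda>x. sin (\<psi> x) / \<beta>)
      \<le> endpoint_energy a / \<beta> + e / \<beta> + e / \<beta>^2"
    using F_energy_shifted_solution(2)[OF \<open>\<beta> > 0\<close> \<psi>', of "1 / (pi * \<beta>)"] main
    unfolding \<epsilon>_def \<open>\<psi> 1 = a\<close> by linarith
  with F_energy_shifted_solution(1)[OF \<open>\<beta> > 0\<close> \<psi>'] show ?thesis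
    using that by (simp add: a_def e_def)
qed

lemma min_F_bounds:
  fixes \<beta> :: real
  assumes "\<beta> > 0"
  shows "endpoint_energy optimal_angle / \<beta> \<le> min_F \<beta> (1 / (pi * \<beta>))"
    and "min_F \<beta> (1 / (pi * \<beta>))
      \<le> endpoint_energy optimal_angle / \<beta> + exp (- 1 / \<beta>) / \<beta> + exp (- 1 / \<beta>) / \<beta>^2"
proof -
  define S where "S = {F_energy \<beta> (1 / (pi * \<beta>)) \<phi> g | \<phi> g. H1_with_deriv \<phi> g \<and> \<phi> 0 = 0}"
  have min_F: "min_F \<beta> (1 / (pi * \<beta>)) = Inf S" by (simp add: S_def min_F_def)
  have lower: "endpoint_energy optimal_angle / \<beta> \<le> s" if s: "s \<in> S" for s
  proof -
    obtain \<phi> g where "s = F_energy \<beta> (1 / (pi * \<beta>)) \<phi> g" "H1_with_deriv \<phi> g" "\<phi> 0 = 0"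
      using s unfolding S_def by blast
    moreover have "endpoint_energy optimal_angle / \<beta> \<le> endpoint_energy (\<phi> 1) / \<beta>"
      using endpoint_energy_ge \<open>\<beta> > 0\<close> by (simp add: divide_right_mono)
    ultimately show ?thesis
      using F_energy_ge_endpoint_energy[OF \<open>\<beta> > 0\<close>] by fastforce
  qed
  obtain \<phi> g where "H1_with_deriv \<phi> g" "\<phi> 0 = 0"
    and upper: "F_energy \<beta> (1 / (pi * \<beta>)) \<phi> g
      \<le> endpoint_energy optimal_angle / \<beta> + exp (- 1 / \<beta>) / \<beta> + exp (- 1 / \<beta>) / \<beta>^2"
    using kink_energy_le[OF \<open>\<beta> > 0\<close>] .
  then have in_S: "F_energy \<beta> (1 / (pi * \<beta>)) \<phi> g \<in> S" unfolding S_def by blast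
  show "endpoint_energy optimal_angle / \<beta> \<le> min_F \<beta> (1 / (pi * \<beta>))"
    unfolding min_F using in_S lower by (intro cInf_greatest) auto
  have "Inf S \<le> F_energy \<beta> (1 / (pi * \<beta>)) \<phi> g"
    using in_S lower by (intro cInf_lower bdd_belowI) auto
  then show "min_F \<beta> (1 / (pi * \<beta>))
      \<le> endpoint_energy optimal_angle / \<beta> + exp (- 1 / \<beta>) / \<beta> + exp (- 1 / \<beta>) / \<beta>^2"
    unfolding min_F using upper by simp
qed

lemma exp_neg_inverse_div_power_smallo:
  "(\<lambda>\<beta>::real. exp (- 1 / \<beta>) / \<beta>^k) \<in> o[at_right 0](\<lambda>\<beta>. \<beta>^n)"
proof (rule smalloI_tendsto)
  have "((\<lambda>\<beta>. inverse \<beta> ^ (k + n) / exp (inverse \<beta>)) \<longlongrightarrow> 0) (at_right (0::real))"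
    using filterlim_compose[OF tendsto_power_div_exp_0 filterlim_inverse_at_top_right] by (simp add: o_def)
  moreover have "\<forall>\<^sub>F \<beta> in at_right (0::real).
      inverse \<beta> ^ (k + n) / exp (inverse \<beta>) = exp (- 1 / \<beta>) / \<beta>^k / \<beta>^n"
    using eventually_at_right_less
    by eventually_elim (simp add: exp_minus power_add power_inverse field_simps)
  ultimately show "((\<lambda>\<beta>. exp (- 1 / \<beta>) / \<beta>^k / \<beta>^n) \<longlongrightarrow> 0) (at_right (0::real))"
    by (rule Lim_transform_eventually)
  show "\<forall>\<^sub>F \<beta> in at_right (0::real). \<beta>^n \<noteq> 0"
    using eventually_at_right_less by eventually_elim simp
qed

theorem proposition8:
  shows "\<forall>n::nat. n \<ge> 1 \<longrightarrow>
    (\<lambda>\<beta>::real. min_F \<beta> (1 / (pi * \<beta>))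
        - ((1 - sqrt (1 - 4 * (1/pi)^2)) / (4 * \<beta>) - (1/pi) / (2 * \<beta>) * arcsin (2 * (1/pi))))
      \<in> o[at_right 0](\<lambda>\<beta>. \<beta> ^ n)"
proof (intro allI impI)
  fix n :: nat
  define error where "error \<beta> = exp (- 1 / \<beta>) / \<beta>^1 + exp (- 1 / \<beta>) / \<beta>^2" for \<beta> :: real
  have main_term: "(1 - sqrt (1 - 4 * (1/pi)^2)) / (4 * \<beta>) - (1/pi) / (2 * \<beta>) * arcsin (2 * (1/pi))
      = endpoint_energy optimal_angle / \<beta>" for \<beta> :: real
    unfolding endpoint_energy_optimal_angle by (simp add: diff_divide_distrib)
  have bound: "\<bar>min_F \<beta> (1 / (pi * \<beta>)) - endpoint_energy optimal_angle / \<beta>\<bar> \<le> \<bar>error \<beta>\<bar>"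
    if "\<beta> > 0" for \<beta> :: real
    using min_F_bounds[OF that] by (simp add: error_def)
  have "\<forall>\<^sub>F \<beta> in at_right 0.
      norm (min_F \<beta> (1 / (pi * \<beta>)) - endpoint_energy optimal_angle / \<beta>) \<le> 1 * norm (error \<beta>)"
    using eventually_at_right_less[of "0::real"]
    by (rule eventually_mono) (unfold real_norm_def mult_1, erule bound)
  then have "(\<lambda>\<beta>. min_F \<beta> (1 / (pi * \<beta>)) - endpoint_energy optimal_angle / \<beta>) \<in> O[at_right 0](error)"
    by (rule bigoI)
  moreover have "error \<in> o[at_right 0](\<lambda>\<beta>. \<beta>^n)"
    unfolding error_def by (intro sum_in_smallo exp_neg_inverse_div_power_smallo)
  ultimately have "(\<lambda>\<beta>. min_F \<beta> (1 / (pi * \<beta>)) - endpoint_energy optimal_angle / \<beta>)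
      \<in> o[at_right 0](\<lambda>\<beta>. \<beta>^n)"
    by (rule landau_o.big_small_trans)
  then show "(\<lambda>\<beta>::real. min_F \<beta> (1 / (pi * \<beta>))
        - ((1 - sqrt (1 - 4 * (1/pi)^2)) / (4 * \<beta>) - (1/pi) / (2 * \<beta>) * arcsin (2 * (1/pi))))
      \<in> o[at_right 0](\<lambda>\<beta>. \<beta> ^ n)"
    by (simp only: main_term)
qed

end
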